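(* Let $0<p<1$ be a constant. For positive integers $n,m$, let $G_{n,m}$ be the random bipartite graph on the vertex set $V_1\cup V_2$ with $V_1\cap V_2=\emptyset$, $|V_1|=n$, $|V_2|=m$, in which each pair $\{i,k\}$ with $i\in V_1$, $k\in V_2$ is an edge independently with probability $p$, and there are no other edges. Suppose $n\in\Theta(m)$, i.e. there are constants $a,b>0$ with $n\le a m$ and $m\le b n$ for all sufficiently large $n,m$. Then $\Pr(G_{n,m}\text{ is a UNN})\to 1$ as $n+m\to\infty$.
   Context: All graphs are finite, simple and undirected. For a vertex $v$ of a graph, $\mathrm{nb}(v)$ denotes the set of its neighbors; a vertex is not its own neighbor. A graph $G=(V,E)$ is a unique-neighborhood network (UNN) if distinct vertices have distinct neighborhoods, i.e. $\mathrm{nb}(u)\neq\mathrm{nb}(v)$ (equivalently $\mathrm{nb}(u)\triangle\mathrm{nb}(v)\neq\emptyset$) for all distinct $u,v\in V$. *)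

theory Defs
  imports "HOL-Analysis.Analysis"
begin

definition nb :: "'v set \<Rightarrow> ('v \<Rightarrow> 'v \<Rightarrow> bool) \<Rightarrow> 'v \<Rightarrow> 'v set" where
  "nb V adj v = {u \<in> V. adj v u}"

definition UNN :: "'v set \<Rightarrow> ('v \<Rightarrow> 'v \<Rightarrow> bool) \<Rightarrow> bool" where
  "UNN V adj \<longleftrightarrow> (\<forall>u\<in>V. \<forall>v\<in>V. u \<noteq> v \<longrightarrow> nb V adj u \<noteq> nb V adj v)"

text \<open>Bipartite graph on V1 = Inl ` {0..<n}, V2 = Inr ` {0..<m} determined by the
  set E \<subseteq> {0..<n} \<times> {0..<m} of pairs (i,k) that are edges {Inl i, Inr k}.\<close>
definition bip_vertices :: "nat \<Rightarrow> nat \<Rightarrow> (nat + nat) set" where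
  "bip_vertices n m = Inl ` {0..<n} \<union> Inr ` {0..<m}"

fun bip_adj :: "(nat \<times> nat) set \<Rightarrow> nat + nat \<Rightarrow> nat + nat \<Rightarrow> bool" where
  "bip_adj E (Inl i) (Inr k) = ((i, k) \<in> E)"
| "bip_adj E (Inr k) (Inl i) = ((i, k) \<in> E)"
| "bip_adj E _ _ = False"

definition prob_bip :: "real \<Rightarrow> nat \<Rightarrow> nat \<Rightarrow> ((nat \<times> nat) set \<Rightarrow> bool) \<Rightarrow> real" where
  "prob_bip p n m P =
     (\<Sum>E\<in>{E. E \<subseteq> {0..<n} \<times> {0..<m} \<and> P E}.
        p ^ card E * (1 - p) ^ (n * m - card E))"

end

theory Submission
  imports Defs
begin

text \<open>Let \<open>q = p\<^sup>2 + (1 - p)\<^sup>2 < 1\<close>. Two vertices of \<open>V\<^sub>1\<close> have equal neighbourhoods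
  with probability \<open>q\<^sup>m\<close>, as the \<open>m\<close> vertices of \<open>V\<^sub>2\<close> decide independently whether they are
  adjacent to both or to neither; symmetrically for \<open>V\<^sub>2\<close>. A vertex of \<open>V\<^sub>1\<close> and one of \<open>V\<^sub>2\<close>
  can only share the empty neighbourhood, which requires an isolated vertex in \<open>V\<^sub>1\<close>, an event
  of probability at most \<open>n (1 - p)\<^sup>m\<close>. By the union bound the graph fails to be a UNN with
  probability at most \<open>n\<^sup>2 q\<^sup>m + m\<^sup>2 q\<^sup>n + n (1 - p)\<^sup>m\<close>, which tends to \<open>0\<close> when \<open>n\<close> and \<open>m\<close>
  are comparable.\<close>

definition bernoulli_weight :: "real \<Rightarrow> 'a set \<Rightarrow> 'a set \<Rightarrow> real" where
  "bernoulli_weight p S E = (\<Prod>x\<in>S. if x \<in> E then p else 1 - p)"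

definition bernoulli_prob :: "real \<Rightarrow> 'a set \<Rightarrow> ('a set \<Rightarrow> bool) \<Rightarrow> real" where
  "bernoulli_prob p S P = (\<Sum>E\<in>{E. E \<subseteq> S \<and> P E}. bernoulli_weight p S E)"

lemma finite_subsets_with:
  "finite S \<Longrightarrow> finite {E. E \<subseteq> S \<and> P E}"
  by (rule finite_subset[of _ "Pow S"]) auto

lemma bernoulli_weight_nonneg: "0 \<le> p \<Longrightarrow> p \<le> 1 \<Longrightarrow> 0 \<le> bernoulli_weight p S E"
  unfolding bernoulli_weight_def by (intro prod_nonneg) auto

lemma bernoulli_weight_eq:
  assumes "finite S" "E \<subseteq> S"
  shows "bernoulli_weight p S E = p ^ card E * (1 - p) ^ (card S - card E)"
proof -
  have "bernoulli_weight p S E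
      = (\<Prod>x\<in>S - E. if x \<in> E then p else 1 - p) * (\<Prod>x\<in>E. if x \<in> E then p else 1 - p)"
    unfolding bernoulli_weight_def by (rule prod.subset_diff[OF assms(2,1)])
  also have "\<dots> = (1 - p) ^ card (S - E) * p ^ card E" by simp
  finally show ?thesis
    using assms by (simp add: card_Diff_subset finite_subset)
qed

lemma bernoulli_weight_cong:
  assumes "E \<inter> S = F \<inter> S"
  shows "bernoulli_weight p S E = bernoulli_weight p S F"
proof -
  have "x \<in> E \<longleftrightarrow> x \<in> F" if "x \<in> S" for x
    using assms that by blast
  then show ?thesis
    unfolding bernoulli_weight_def by (intro prod.cong refl) simp
qed

lemma bernoulli_weight_Un:
  "finite A \<Longrightarrow> finite B \<Longrightarrow> A \<inter> B = {} \<Longrightarrow>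
    bernoulli_weight p (A \<union> B) E = bernoulli_weight p A E * bernoulli_weight p B E"
  unfolding bernoulli_weight_def by (rule prod.union_disjoint)

lemma bernoulli_weight_UN:
  assumes "finite K" "\<And>k. k \<in> K \<Longrightarrow> finite (B k)" "disjoint_family_on B K"
  shows "bernoulli_weight p (\<Union>k\<in>K. B k) E = (\<Prod>k\<in>K. bernoulli_weight p (B k) E)"
  unfolding bernoulli_weight_def
  using assms by (intro prod.UNION_disjoint) (auto simp: disjoint_family_on_def)

lemma sum_bernoulli_weight_Pow:
  assumes "finite S"
  shows "(\<Sum>E\<in>Pow S. bernoulli_weight p S E) = 1"
proof -
  have "1 = (\<Prod>x\<in>S. p + (1 - p))" by simp
  also have "\<dots> = (\<Sum>E\<in>Pow S. (\<Prod>x\<in>E. p) * (\<Prod>x\<in>S - E. 1 - p))"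
    by (rule prod_add[OF assms])
  also have "\<dots> = (\<Sum>E\<in>Pow S. bernoulli_weight p S E)"
    using assms by (intro sum.cong) (auto simp: bernoulli_weight_eq card_Diff_subset finite_subset)
  finally show ?thesis ..
qed

lemma bernoulli_prob_nonneg: "0 \<le> p \<Longrightarrow> p \<le> 1 \<Longrightarrow> 0 \<le> bernoulli_prob p S P"
  unfolding bernoulli_prob_def by (intro sum_nonneg bernoulli_weight_nonneg)

lemma bernoulli_prob_Not:
  assumes "finite S"
  shows "bernoulli_prob p S (\<lambda>E. \<not> P E) = 1 - bernoulli_prob p S P"
proof -
  have fin: "\<And>Q. finite {E. E \<subseteq> S \<and> Q E}" by (rule finite_subsets_with[OF assms])
  have "bernoulli_prob p S P + bernoulli_prob p S (\<lambda>E. \<not> P E)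
      = sum (bernoulli_weight p S) ({E. E \<subseteq> S \<and> P E} \<union> {E. E \<subseteq> S \<and> \<not> P E})"
    unfolding bernoulli_prob_def by (rule sum.union_disjoint[OF fin fin, symmetric]) blast
  also have "{E. E \<subseteq> S \<and> P E} \<union> {E. E \<subseteq> S \<and> \<not> P E} = Pow S" by blast
  finally show ?thesis
    using sum_bernoulli_weight_Pow[OF assms, of p] by linarith
qed

lemma bernoulli_prob_mono:
  assumes "finite S" "0 \<le> p" "p \<le> 1" "\<And>E. E \<subseteq> S \<Longrightarrow> P E \<Longrightarrow> Q E"
  shows "bernoulli_prob p S P \<le> bernoulli_prob p S Q"
  unfolding bernoulli_prob_def using assms
  by (intro sum_mono2 finite_subsets_with bernoulli_weight_nonneg) auto

lemma bernoulli_prob_disj_le: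
  assumes "finite S" "0 \<le> p" "p \<le> 1"
  shows "bernoulli_prob p S (\<lambda>E. P E \<or> Q E) \<le> bernoulli_prob p S P + bernoulli_prob p S Q"
proof -
  let ?f = "bernoulli_weight p S"
  have fin: "\<And>Q. finite {E. E \<subseteq> S \<and> Q E}" by (rule finite_subsets_with[OF assms(1)])
  have union: "{E. E \<subseteq> S \<and> (P E \<or> Q E)} = {E. E \<subseteq> S \<and> P E} \<union> {E. E \<subseteq> S \<and> Q E}" by blast
  have "bernoulli_prob p S (\<lambda>E. P E \<or> Q E) + sum ?f ({E. E \<subseteq> S \<and> P E} \<inter> {E. E \<subseteq> S \<and> Q E})
      = bernoulli_prob p S P + bernoulli_prob p S Q"
    unfolding bernoulli_prob_def union by (rule sum.union_inter[OF fin fin])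
  moreover have "0 \<le> sum ?f ({E. E \<subseteq> S \<and> P E} \<inter> {E. E \<subseteq> S \<and> Q E})"
    using assms by (intro sum_nonneg bernoulli_weight_nonneg)
  ultimately show ?thesis by linarith
qed

lemma bernoulli_prob_Bex_le:
  assumes "finite S" "0 \<le> p" "p \<le> 1" "finite I"
  shows "bernoulli_prob p S (\<lambda>E. \<exists>i\<in>I. P i E) \<le> (\<Sum>i\<in>I. bernoulli_prob p S (P i))"
  using assms(4)
proof (induction I rule: finite_induct)
  case empty
  then show ?case by (simp add: bernoulli_prob_def)
next
  case (insert i I)
  have "bernoulli_prob p S (\<lambda>E. \<exists>j\<in>insert i I. P j E)
      \<le> bernoulli_prob p S (P i) + bernoulli_prob p S (\<lambda>E. \<exists>j\<in>I. P j E)"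
    using bernoulli_prob_disj_le[OF assms(1-3)] by simp
  with insert show ?case by simp
qed

lemma bernoulli_prob_restrict:
  assumes "finite S" "T \<subseteq> S"
  shows "bernoulli_prob p S (\<lambda>E. Q (E \<inter> T)) = bernoulli_prob p T Q"
proof -
  let ?A = "{F. F \<subseteq> T \<and> Q F} \<times> Pow (S - T)"
  have fin: "finite T" "finite (S - T)" using assms finite_subset by auto
  have "bij_betw (\<lambda>(F, G). F \<union> G) ?A {E. E \<subseteq> S \<and> Q (E \<inter> T)}"
  proof (rule bij_betw_byWitness[where f' = "\<lambda>E. (E \<inter> T, E - T)"])
    show "(\<lambda>(F, G). F \<union> G) ` ?A \<subseteq> {E. E \<subseteq> S \<and> Q (E \<inter> T)}"
    proof clarsimp
      fix F G assume "F \<subseteq> T" "Q F" "G \<subseteq> S - T"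
      moreover from this have "(F \<union> G) \<inter> T = F" by blast
      ultimately show "F \<subseteq> S \<and> G \<subseteq> S \<and> Q ((F \<union> G) \<inter> T)" using assms(2) by auto
    qed
  qed auto
  then have "bernoulli_prob p S (\<lambda>E. Q (E \<inter> T)) = (\<Sum>(F, G)\<in>?A. bernoulli_weight p S (F \<union> G))"
    unfolding bernoulli_prob_def by (simp add: sum.reindex_bij_betw[symmetric] case_prod_beta)
  also have "\<dots> = (\<Sum>(F, G)\<in>?A. bernoulli_weight p T F * bernoulli_weight p (S - T) G)"
  proof (intro sum.cong refl, clarsimp)
    fix F G assume "F \<subseteq> T" "G \<subseteq> S - T"
    have "bernoulli_weight p S (F \<union> G)
        = bernoulli_weight p T (F \<union> G) * bernoulli_weight p (S - T) (F \<union> G)"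
      using bernoulli_weight_Un[OF fin, of p "F \<union> G"] assms(2) by (simp add: Un_absorb1)
    also have "\<dots> = bernoulli_weight p T F * bernoulli_weight p (S - T) G"
      using \<open>F \<subseteq> T\<close> \<open>G \<subseteq> S - T\<close> by (intro arg_cong2[where f = "(*)"] bernoulli_weight_cong) blast+
    finally show "bernoulli_weight p S (F \<union> G) = bernoulli_weight p T F * bernoulli_weight p (S - T) G" .
  qed
  also have "\<dots> = bernoulli_prob p T Q * (\<Sum>G\<in>Pow (S - T). bernoulli_weight p (S - T) G)"
    unfolding bernoulli_prob_def by (simp add: sum_product sum.cartesian_product case_prod_beta)
  also have "(\<Sum>G\<in>Pow (S - T). bernoulli_weight p (S - T) G) = 1"
    by (rule sum_bernoulli_weight_Pow[OF fin(2)])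
  finally show ?thesis by simp
qed

lemma bernoulli_prob_UN_blocks:
  assumes "finite K" "\<And>k. k \<in> K \<Longrightarrow> finite (B k)" "disjoint_family_on B K"
  shows "bernoulli_prob p (\<Union>k\<in>K. B k) (\<lambda>E. \<forall>k\<in>K. Q k (E \<inter> B k))
       = (\<Prod>k\<in>K. bernoulli_prob p (B k) (Q k))"
proof -
  let ?U = "\<Union>k\<in>K. B k"
  let ?P = "PiE K (\<lambda>k. {F. F \<subseteq> B k \<and> Q k F})"
  let ?h = "\<lambda>g. \<Union>k\<in>K. g k"
  have block: "?h g \<inter> B k = g k" if "g \<in> ?P" "k \<in> K" for g k
  proof -
    have "g l \<inter> B k = {}" if "l \<in> K" "l \<noteq> k" for l
      using assms(3) \<open>g \<in> ?P\<close> \<open>k \<in> K\<close> that by (fastforce simp: disjoint_family_on_def)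
    moreover have "g k \<subseteq> B k" using that by auto
    ultimately show ?thesis using \<open>k \<in> K\<close> by blast
  qed
  have "bij_betw ?h ?P {E. E \<subseteq> ?U \<and> (\<forall>k\<in>K. Q k (E \<inter> B k))}"
  proof (rule bij_betw_byWitness[where f' = "\<lambda>E. restrict (\<lambda>k. E \<inter> B k) K"])
    show "\<forall>g\<in>?P. restrict (\<lambda>k. ?h g \<inter> B k) K = g"
      using block by (auto simp: PiE_def extensional_def fun_eq_iff)
    show "?h ` ?P \<subseteq> {E. E \<subseteq> ?U \<and> (\<forall>k\<in>K. Q k (E \<inter> B k))}"
      using block by (fastforce simp: PiE_def)
  qed auto
  then have "bernoulli_prob p ?U (\<lambda>E. \<forall>k\<in>K. Q k (E \<inter> B k)) = (\<Sum>g\<in>?P. bernoulli_weight p ?U (?h g))"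
    unfolding bernoulli_prob_def by (simp add: sum.reindex_bij_betw[symmetric])
  also have "\<dots> = (\<Sum>g\<in>?P. \<Prod>k\<in>K. bernoulli_weight p (B k) (g k))"
  proof (rule sum.cong[OF refl])
    fix g assume "g \<in> ?P"
    have "bernoulli_weight p ?U (?h g) = (\<Prod>k\<in>K. bernoulli_weight p (B k) (?h g))"
      by (rule bernoulli_weight_UN[OF assms])
    also have "\<dots> = (\<Prod>k\<in>K. bernoulli_weight p (B k) (g k))"
      using block[OF \<open>g \<in> ?P\<close>] by (intro prod.cong refl bernoulli_weight_cong) auto
    finally show "bernoulli_weight p ?U (?h g) = (\<Prod>k\<in>K. bernoulli_weight p (B k) (g k))" .
  qed
  also have "\<dots> = (\<Prod>k\<in>K. bernoulli_prob p (B k) (Q k))"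
    unfolding bernoulli_prob_def using assms by (intro prod_sum_PiE[symmetric] finite_subsets_with)
  finally show ?thesis .
qed

lemma bernoulli_prob_indep_blocks:
  assumes "finite S" "finite K" "\<And>k. k \<in> K \<Longrightarrow> B k \<subseteq> S" "disjoint_family_on B K"
  shows "bernoulli_prob p S (\<lambda>E. \<forall>k\<in>K. Q k (E \<inter> B k)) = (\<Prod>k\<in>K. bernoulli_prob p (B k) (Q k))"
proof -
  let ?U = "\<Union>k\<in>K. B k"
  have "\<And>E k. k \<in> K \<Longrightarrow> E \<inter> ?U \<inter> B k = E \<inter> B k" by blast
  then have "bernoulli_prob p S (\<lambda>E. \<forall>k\<in>K. Q k (E \<inter> B k))
      = bernoulli_prob p S (\<lambda>E. (\<lambda>F. \<forall>k\<in>K. Q k (F \<inter> B k)) (E \<inter> ?U))"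
    by simp
  also have "\<dots> = bernoulli_prob p ?U (\<lambda>F. \<forall>k\<in>K. Q k (F \<inter> B k))"
    using assms by (intro bernoulli_prob_restrict) auto
  also have "\<dots> = (\<Prod>k\<in>K. bernoulli_prob p (B k) (Q k))"
    using assms by (intro bernoulli_prob_UN_blocks) (auto intro: finite_subset)
  finally show ?thesis .
qed

lemma bernoulli_prob_pair_agree:
  assumes "a \<noteq> b"
  shows "bernoulli_prob p {a, b} (\<lambda>F. a \<in> F \<longleftrightarrow> b \<in> F) = p\<^sup>2 + (1 - p)\<^sup>2"
proof -
  have "{F. F \<subseteq> {a, b} \<and> (a \<in> F \<longleftrightarrow> b \<in> F)} = {{}, {a, b}}" by auto
  then show ?thesis
    using assms by (simp add: bernoulli_prob_def bernoulli_weight_def power2_eq_square)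
qed

lemma bernoulli_prob_singleton_not_mem: "bernoulli_prob p {a} (\<lambda>F. a \<notin> F) = 1 - p"
proof -
  have "{F. F \<subseteq> {a} \<and> a \<notin> F} = {{}}" by auto
  then show ?thesis by (simp add: bernoulli_prob_def bernoulli_weight_def)
qed

lemma bernoulli_prob_pairs_agree:
  assumes "finite S" "finite K" "\<And>k. k \<in> K \<Longrightarrow> x k \<in> S \<and> y k \<in> S \<and> x k \<noteq> y k"
    and "disjoint_family_on (\<lambda>k. {x k, y k}) K"
  shows "bernoulli_prob p S (\<lambda>E. \<forall>k\<in>K. x k \<in> E \<longleftrightarrow> y k \<in> E) = (p\<^sup>2 + (1 - p)\<^sup>2) ^ card K"
proof -
  have "bernoulli_prob p S (\<lambda>E. \<forall>k\<in>K. x k \<in> E \<longleftrightarrow> y k \<in> E)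
      = bernoulli_prob p S (\<lambda>E. \<forall>k\<in>K. (\<lambda>k F. x k \<in> F \<longleftrightarrow> y k \<in> F) k (E \<inter> {x k, y k}))"
    by simp
  also have "\<dots> = (\<Prod>k\<in>K. bernoulli_prob p {x k, y k} (\<lambda>F. x k \<in> F \<longleftrightarrow> y k \<in> F))"
    using assms by (intro bernoulli_prob_indep_blocks) auto
  also have "\<dots> = (\<Prod>k\<in>K. p\<^sup>2 + (1 - p)\<^sup>2)"
    using assms(3) by (intro prod.cong refl bernoulli_prob_pair_agree) blast
  finally show ?thesis by simp
qed

lemma bernoulli_prob_avoid:
  assumes "finite S" "finite K" "\<And>k. k \<in> K \<Longrightarrow> x k \<in> S" "inj_on x K"
  shows "bernoulli_prob p S (\<lambda>E. \<forall>k\<in>K. x k \<notin> E) = (1 - p) ^ card K"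
proof -
  have "disjoint_family_on (\<lambda>k. {x k}) K"
    using assms(4) by (auto simp: disjoint_family_on_def inj_on_def)
  then have "bernoulli_prob p S (\<lambda>E. \<forall>k\<in>K. (\<lambda>k F. x k \<notin> F) k (E \<inter> {x k}))
      = (\<Prod>k\<in>K. bernoulli_prob p {x k} (\<lambda>F. x k \<notin> F))"
    using assms by (intro bernoulli_prob_indep_blocks) auto
  then show ?thesis by (simp add: bernoulli_prob_singleton_not_mem)
qed

lemma prob_bip_eq_bernoulli_prob:
  "prob_bip p n m P = bernoulli_prob p ({..<n} \<times> {..<m}) P"
  unfolding prob_bip_def bernoulli_prob_def atLeast0LessThan
  by (intro sum.cong refl) (simp add: bernoulli_weight_eq card_cartesian_product finite_subset)

lemma nb_bip_Inl: "nb (bip_vertices n m) (bip_adj E) (Inl i) = Inr ` {k. k < m \<and> (i, k) \<in> E}"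
  unfolding nb_def bip_vertices_def
proof (intro set_eqI iffI)
  fix u assume "u \<in> {u \<in> Inl ` {0..<n} \<union> Inr ` {0..<m}. bip_adj E (Inl i) u}"
  then show "u \<in> Inr ` {k. k < m \<and> (i, k) \<in> E}" by (cases u) auto
qed auto

lemma nb_bip_Inr: "nb (bip_vertices n m) (bip_adj E) (Inr k) = Inl ` {i. i < n \<and> (i, k) \<in> E}"
  unfolding nb_def bip_vertices_def
proof (intro set_eqI iffI)
  fix u assume "u \<in> {u \<in> Inl ` {0..<n} \<union> Inr ` {0..<m}. bip_adj E (Inr k) u}"
  then show "u \<in> Inl ` {i. i < n \<and> (i, k) \<in> E}" by (cases u) auto
qed auto

lemma Inl_in_bip_vertices [simp]: "Inl i \<in> bip_vertices n m \<longleftrightarrow> i < n"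
  and Inr_in_bip_vertices [simp]: "Inr k \<in> bip_vertices n m \<longleftrightarrow> k < m"
  by (auto simp: bip_vertices_def)

lemma Inr_image_eq_Inl_image: "Inr ` A = Inl ` B \<longleftrightarrow> A = {} \<and> B = {}"
  by blast

lemma not_UNN_bip:
  assumes "\<not> UNN (bip_vertices n m) (bip_adj E)"
  shows "(\<exists>i\<in>{..<n}. \<exists>j\<in>{..<n}. i \<noteq> j \<and> (\<forall>k\<in>{..<m}. (i, k) \<in> E \<longleftrightarrow> (j, k) \<in> E))
    \<or> (\<exists>k\<in>{..<m}. \<exists>l\<in>{..<m}. k \<noteq> l \<and> (\<forall>i\<in>{..<n}. (i, k) \<in> E \<longleftrightarrow> (i, l) \<in> E))
    \<or> (\<exists>i\<in>{..<n}. \<forall>k\<in>{..<m}. (i, k) \<notin> E)"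
proof -
  from assms obtain u v where uv: "u \<in> bip_vertices n m" "v \<in> bip_vertices n m" "u \<noteq> v"
    "nb (bip_vertices n m) (bip_adj E) u = nb (bip_vertices n m) (bip_adj E) v"
    unfolding UNN_def by blast
  show ?thesis
  proof (cases u; cases v)
    fix i j assume "u = Inl i" "v = Inl j"
    with uv have "{k. k < m \<and> (i, k) \<in> E} = {k. k < m \<and> (j, k) \<in> E}" "i < n" "j < n" "i \<noteq> j"
      by (simp_all add: nb_bip_Inl inj_image_eq_iff)
    then show ?thesis
      unfolding set_eq_iff by blast
  next
    fix i k assume "u = Inl i" "v = Inr k"
    with uv show ?thesis
      by (auto simp: nb_bip_Inl nb_bip_Inr Inr_image_eq_Inl_image)
  next
    fix k i assume "u = Inr k" "v = Inl i"
    with uv show ?thesis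
      by (auto simp: nb_bip_Inl nb_bip_Inr Inr_image_eq_Inl_image eq_commute[of "Inl ` _"])
  next
    fix k l assume "u = Inr k" "v = Inr l"
    with uv have "{i. i < n \<and> (i, k) \<in> E} = {i. i < n \<and> (i, l) \<in> E}" "k < m" "l < m" "k \<noteq> l"
      by (simp_all add: nb_bip_Inr inj_image_eq_iff)
    then show ?thesis
      unfolding set_eq_iff by blast
  qed
qed

lemma bernoulli_prob_twin_rows_le:
  assumes "0 \<le> p" "p \<le> 1"
  shows "bernoulli_prob p ({..<n} \<times> {..<m})
      (\<lambda>E. \<exists>i\<in>{..<n}. \<exists>j\<in>{..<n}. i \<noteq> j \<and> (\<forall>k\<in>{..<m}. (i, k) \<in> E \<longleftrightarrow> (j, k) \<in> E))
    \<le> real (n * n) * (p\<^sup>2 + (1 - p)\<^sup>2) ^ m"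
proof -
  let ?P = "bernoulli_prob p ({..<n} \<times> {..<m})"
  let ?twins = "\<lambda>i j E. i \<noteq> j \<and> (\<forall>k\<in>{..<m}. (i, k) \<in> E \<longleftrightarrow> (j, k) \<in> E)"
  have twins: "?P (?twins i j) \<le> (p\<^sup>2 + (1 - p)\<^sup>2) ^ m" if "i < n" "j < n" for i j
  proof (cases "i = j")
    case True
    then show ?thesis by (simp add: bernoulli_prob_def)
  next
    case False
    then have "?P (?twins i j) = ?P (\<lambda>E. \<forall>k\<in>{..<m}. (i, k) \<in> E \<longleftrightarrow> (j, k) \<in> E)" by simp
    also have "\<dots> = (p\<^sup>2 + (1 - p)\<^sup>2) ^ card {..<m}"
      using that False by (intro bernoulli_prob_pairs_agree) (auto simp: disjoint_family_on_def)
    finally show ?thesis by simp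
  qed
  have "?P (\<lambda>E. \<exists>i\<in>{..<n}. \<exists>j\<in>{..<n}. ?twins i j E) \<le> (\<Sum>i<n. ?P (\<lambda>E. \<exists>j\<in>{..<n}. ?twins i j E))"
    using assms by (intro bernoulli_prob_Bex_le) auto
  also have "\<dots> \<le> (\<Sum>i<n. \<Sum>j<n. ?P (?twins i j))"
    using assms by (intro sum_mono bernoulli_prob_Bex_le) auto
  also have "\<dots> \<le> (\<Sum>i<n. \<Sum>j<n. (p\<^sup>2 + (1 - p)\<^sup>2) ^ m)"
    using twins by (intro sum_mono) auto
  finally show ?thesis by simp
qed

lemma bernoulli_prob_twin_columns_le:
  assumes "0 \<le> p" "p \<le> 1"
  shows "bernoulli_prob p ({..<n} \<times> {..<m})
      (\<lambda>E. \<exists>k\<in>{..<m}. \<exists>l\<in>{..<m}. k \<noteq> l \<and> (\<forall>i\<in>{..<n}. (i, k) \<in> E \<longleftrightarrow> (i, l) \<in> E))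
    \<le> real (m * m) * (p\<^sup>2 + (1 - p)\<^sup>2) ^ n"
proof -
  let ?P = "bernoulli_prob p ({..<n} \<times> {..<m})"
  let ?twins = "\<lambda>k l E. k \<noteq> l \<and> (\<forall>i\<in>{..<n}. (i, k) \<in> E \<longleftrightarrow> (i, l) \<in> E)"
  have twins: "?P (?twins k l) \<le> (p\<^sup>2 + (1 - p)\<^sup>2) ^ n" if "k < m" "l < m" for k l
  proof (cases "k = l")
    case True
    then show ?thesis by (simp add: bernoulli_prob_def)
  next
    case False
    then have "?P (?twins k l) = ?P (\<lambda>E. \<forall>i\<in>{..<n}. (i, k) \<in> E \<longleftrightarrow> (i, l) \<in> E)" by simp
    also have "\<dots> = (p\<^sup>2 + (1 - p)\<^sup>2) ^ card {..<n}"
      using that False by (intro bernoulli_prob_pairs_agree) (auto simp: disjoint_family_on_def)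
    finally show ?thesis by simp
  qed
  have "?P (\<lambda>E. \<exists>k\<in>{..<m}. \<exists>l\<in>{..<m}. ?twins k l E) \<le> (\<Sum>k<m. ?P (\<lambda>E. \<exists>l\<in>{..<m}. ?twins k l E))"
    using assms by (intro bernoulli_prob_Bex_le) auto
  also have "\<dots> \<le> (\<Sum>k<m. \<Sum>l<m. ?P (?twins k l))"
    using assms by (intro sum_mono bernoulli_prob_Bex_le) auto
  also have "\<dots> \<le> (\<Sum>k<m. \<Sum>l<m. (p\<^sup>2 + (1 - p)\<^sup>2) ^ n)"
    using twins by (intro sum_mono) auto
  finally show ?thesis by simp
qed

lemma bernoulli_prob_empty_row_le:
  assumes "0 \<le> p" "p \<le> 1"
  shows "bernoulli_prob p ({..<n} \<times> {..<m}) (\<lambda>E. \<exists>i\<in>{..<n}. \<forall>k\<in>{..<m}. (i, k) \<notin> E)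
    \<le> real n * (1 - p) ^ m"
proof -
  let ?P = "bernoulli_prob p ({..<n} \<times> {..<m})"
  have "?P (\<lambda>E. \<exists>i\<in>{..<n}. \<forall>k\<in>{..<m}. (i, k) \<notin> E) \<le> (\<Sum>i<n. ?P (\<lambda>E. \<forall>k\<in>{..<m}. (i, k) \<notin> E))"
    using assms by (intro bernoulli_prob_Bex_le) auto
  also have "\<dots> = (\<Sum>i<n. (1 - p) ^ card {..<m})"
    by (intro sum.cong refl bernoulli_prob_avoid) (auto simp: inj_on_def)
  finally show ?thesis by simp
qed

lemma prob_bip_not_UNN_le:
  assumes "0 \<le> p" "p \<le> 1"
  shows "prob_bip p n m (\<lambda>E. \<not> UNN (bip_vertices n m) (bip_adj E))
    \<le> real (n * n) * (p\<^sup>2 + (1 - p)\<^sup>2) ^ m + real (m * m) * (p\<^sup>2 + (1 - p)\<^sup>2) ^ n + real n * (1 - p) ^ m"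
proof -
  let ?P = "bernoulli_prob p ({..<n} \<times> {..<m})"
  let ?A = "\<lambda>E. \<exists>i\<in>{..<n}. \<exists>j\<in>{..<n}. i \<noteq> j \<and> (\<forall>k\<in>{..<m}. (i, k) \<in> E \<longleftrightarrow> (j, k) \<in> E)"
  let ?B = "\<lambda>E. \<exists>k\<in>{..<m}. \<exists>l\<in>{..<m}. k \<noteq> l \<and> (\<forall>i\<in>{..<n}. (i, k) \<in> E \<longleftrightarrow> (i, l) \<in> E)"
  let ?C = "\<lambda>E. \<exists>i\<in>{..<n}. \<forall>k\<in>{..<m}. (i, k) \<notin> E"
  have "prob_bip p n m (\<lambda>E. \<not> UNN (bip_vertices n m) (bip_adj E)) \<le> ?P (\<lambda>E. ?A E \<or> ?B E \<or> ?C E)"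
    unfolding prob_bip_eq_bernoulli_prob
    by (rule bernoulli_prob_mono) (simp_all add: assms not_UNN_bip)
  moreover have "?P (\<lambda>E. ?A E \<or> ?B E \<or> ?C E) \<le> ?P ?A + ?P (\<lambda>E. ?B E \<or> ?C E)"
    by (rule bernoulli_prob_disj_le) (simp_all add: assms)
  moreover have "?P (\<lambda>E. ?B E \<or> ?C E) \<le> ?P ?B + ?P ?C"
    by (rule bernoulli_prob_disj_le) (simp_all add: assms)
  ultimately show ?thesis
    using bernoulli_prob_twin_rows_le[OF assms, where n = n and m = m]
      bernoulli_prob_twin_columns_le[OF assms, where n = n and m = m]
      bernoulli_prob_empty_row_le[OF assms, where n = n and m = m] by linarith
qed

lemma square_times_power_tendsto_zero:
  fixes r :: real
  assumes "0 \<le> r" "r < 1"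
  shows "(\<lambda>t. real t ^ 2 * r ^ t) \<longlonglongrightarrow> 0"
proof -
  have "(\<lambda>t. (real t * sqrt r ^ t)\<^sup>2) \<longlonglongrightarrow> 0\<^sup>2"
    using assms by (intro tendsto_power powser_times_n_limit_0) simp
  moreover have "(real t * sqrt r ^ t)\<^sup>2 = real t ^ 2 * (sqrt r ^ 2) ^ t" for t
    by (simp add: power_mult_distrib flip: power_mult add: mult.commute)
  ultimately show ?thesis
    using assms(1) by simp
qed

lemma comparable_sum_lower_bound:
  fixes a :: real
  assumes "real n \<le> a * real m" "0 \<le> a" "(a + 1) * real M \<le> real n + real m"
  shows "M \<le> m"
proof -
  have "(a + 1) * real M \<le> (a + 1) * real m" using assms by (simp add: algebra_simps)
  then show ?thesis using assms(2) by (simp add: mult_le_cancel_left_pos)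
qed

lemma prob_bip_not_UNN_le_comparable:
  assumes "0 \<le> p" "p \<le> 1" "0 \<le> a" "real n \<le> a * real m" "real m \<le> b * real n"
  shows "prob_bip p n m (\<lambda>E. \<not> UNN (bip_vertices n m) (bip_adj E))
    \<le> a\<^sup>2 * (real m ^ 2 * (p\<^sup>2 + (1 - p)\<^sup>2) ^ m) + b\<^sup>2 * (real n ^ 2 * (p\<^sup>2 + (1 - p)\<^sup>2) ^ n)
      + a * (real m * (1 - p) ^ m)"
proof -
  let ?q = "p\<^sup>2 + (1 - p)\<^sup>2"
  have "real (n * n) \<le> a\<^sup>2 * real m ^ 2"
    using power_mono[OF assms(4), of 2] by (simp add: power2_eq_square algebra_simps)
  then have "real (n * n) * ?q ^ m \<le> a\<^sup>2 * (real m ^ 2 * ?q ^ m)"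
    unfolding mult.assoc[symmetric] by (rule mult_right_mono) simp
  moreover have "real (m * m) \<le> b\<^sup>2 * real n ^ 2"
    using power_mono[OF assms(5), of 2] by (simp add: power2_eq_square algebra_simps)
  then have "real (m * m) * ?q ^ n \<le> b\<^sup>2 * (real n ^ 2 * ?q ^ n)"
    unfolding mult.assoc[symmetric] by (rule mult_right_mono) simp
  moreover have "real n * (1 - p) ^ m \<le> a * (real m * (1 - p) ^ m)"
    unfolding mult.assoc[symmetric] using assms by (intro mult_right_mono) auto
  ultimately show ?thesis
    using prob_bip_not_UNN_le[OF assms(1,2), of n m] by linarith
qed

lemma prob_bip_not_UNN_small:
  assumes "0 < p" "p < 1" "0 < a" "0 < b" "0 < \<epsilon>"
  obtains M where "\<And>n m. real n \<le> a * real m \<Longrightarrow> real m \<le> b * real n \<Longrightarrow>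
    (a + b + 2) * real M \<le> real n + real m \<Longrightarrow>
    prob_bip p n m (\<lambda>E. \<not> UNN (bip_vertices n m) (bip_adj E)) < \<epsilon>"
proof -
  define q where "q = p\<^sup>2 + (1 - p)\<^sup>2"
  define g where
    "g t = a\<^sup>2 * (real t ^ 2 * q ^ t) + b\<^sup>2 * (real t ^ 2 * q ^ t) + a * (real t * (1 - p) ^ t)" for t
  have "q < 1" using assms by (simp add: q_def power2_eq_square algebra_simps mult_pos_pos)
  then have "g \<longlonglongrightarrow> 0"
    unfolding g_def using assms
    by (intro tendsto_add_zero tendsto_mult_right_zero square_times_power_tendsto_zero
        powser_times_n_limit_0) (auto simp: q_def)
  then have "\<forall>\<^sub>F t in sequentially. g t < \<epsilon> / 2"
    by (rule order_tendstoD(2)) (use \<open>0 < \<epsilon>\<close> in linarith)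
  then obtain M where M: "\<And>t. M \<le> t \<Longrightarrow> g t < \<epsilon> / 2"
    unfolding eventually_sequentially by blast
  have "prob_bip p n m (\<lambda>E. \<not> UNN (bip_vertices n m) (bip_adj E)) < \<epsilon>"
    if nm: "real n \<le> a * real m" and mn: "real m \<le> b * real n"
      and large: "(a + b + 2) * real M \<le> real n + real m" for n m
  proof -
    have "0 \<le> a * real M" "0 \<le> b * real M" using assms by simp_all
    with large have "(a + 1) * real M \<le> real n + real m" "(b + 1) * real M \<le> real m + real n"
      by (simp_all add: algebra_simps)
    then have "M \<le> m" "M \<le> n"
      using assms by (auto intro: comparable_sum_lower_bound[OF nm] comparable_sum_lower_bound[OF mn])
    have "0 \<le> a * (real n * (1 - p) ^ n)" "0 \<le> a\<^sup>2 * (real n ^ 2 * q ^ n)" "0 \<le> b\<^sup>2 * (real m ^ 2 * q ^ m)"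
      using assms by (simp_all add: q_def)
    then have "prob_bip p n m (\<lambda>E. \<not> UNN (bip_vertices n m) (bip_adj E)) \<le> g m + g n"
      using prob_bip_not_UNN_le_comparable[of p a n m b, folded q_def] assms nm mn
      unfolding g_def by linarith
    with M[OF \<open>M \<le> m\<close>] M[OF \<open>M \<le> n\<close>] show ?thesis by linarith
  qed
  then show ?thesis by (rule that)
qed

theorem mainTheorem1:
  fixes p a b :: real
  assumes "0 < p" and "p < 1" and "0 < a" and "0 < b"
  shows "\<forall>\<epsilon>>0. \<exists>N. \<forall>n m :: nat. 1 \<le> n \<longrightarrow> 1 \<le> m \<longrightarrow>
           real n \<le> a * real m \<longrightarrow> real m \<le> b * real n \<longrightarrow> N \<le> n + m \<longrightarrow>
           \<bar>prob_bip p n m (\<lambda>E. UNN (bip_vertices n m) (bip_adj E)) - 1\<bar> < \<epsilon>"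
proof (intro allI impI)
  fix \<epsilon> :: real assume "0 < \<epsilon>"
  obtain M where M: "\<And>n m. real n \<le> a * real m \<Longrightarrow> real m \<le> b * real n \<Longrightarrow>
      (a + b + 2) * real M \<le> real n + real m \<Longrightarrow>
      prob_bip p n m (\<lambda>E. \<not> UNN (bip_vertices n m) (bip_adj E)) < \<epsilon>"
    using prob_bip_not_UNN_small[OF assms \<open>0 < \<epsilon>\<close>] by blast
  show "\<exists>N. \<forall>n m :: nat. 1 \<le> n \<longrightarrow> 1 \<le> m \<longrightarrow> real n \<le> a * real m \<longrightarrow> real m \<le> b * real n
      \<longrightarrow> N \<le> n + m \<longrightarrow> \<bar>prob_bip p n m (\<lambda>E. UNN (bip_vertices n m) (bip_adj E)) - 1\<bar> < \<epsilon>"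
  proof (intro exI[of _ "nat \<lceil>(a + b + 2) * real M\<rceil>"] allI impI)
    fix n m :: nat
    assume "real n \<le> a * real m" "real m \<le> b * real n" "nat \<lceil>(a + b + 2) * real M\<rceil> \<le> n + m"
    then have "prob_bip p n m (\<lambda>E. \<not> UNN (bip_vertices n m) (bip_adj E)) < \<epsilon>"
      by (intro M) linarith+
    moreover have "0 \<le> prob_bip p n m (\<lambda>E. \<not> UNN (bip_vertices n m) (bip_adj E))"
      unfolding prob_bip_eq_bernoulli_prob using assms by (intro bernoulli_prob_nonneg) auto
    ultimately show "\<bar>prob_bip p n m (\<lambda>E. UNN (bip_vertices n m) (bip_adj E)) - 1\<bar> < \<epsilon>"
      by (simp add: prob_bip_eq_bernoulli_prob bernoulli_prob_Not)
  qed
qed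

end
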